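(* Let $p,q$ be distinct propositional letters and $\alpha:=p\to(q\looparrowright p)$. Then $p\looparrowright p\notin\mathcal{F}\alpha$.
   Context: Language: propositional letters $\Phi=\{p_0,p_1,\dots\}$; connectives $\neg$, $\lor,\wedge,\to,\leftrightarrow,\vartriangle,\looparrowright$; $\mathsf{FOR}$ the set of all formulas. A substitution is an endomorphism of the free formula algebra. An Epstein model is $\langle v,\mathfrak{R}\rangle$ with $v:\Phi\to\{0,1\}$ and $\mathfrak{R}\subseteq\mathsf{FOR}^2$; truth: letters via $v$, boolean connectives classical, $\vartriangle$: both arguments true and pair in $\mathfrak{R}$; $\looparrowright$: material implication true and pair in $\mathfrak{R}$. $\mathcal{F}$ is the least set containing all classical tautologies of this language and the axioms $(p\looparrowright q)\to(p\to q)$, $(p\vartriangle q)\leftrightarrow((p\looparrowright q)\wedge(p\wedge q))$, closed under uniform substitution and modus ponens; for a formula $\alpha$, $\mathcal{F}\alpha$ is the least set containing $\mathcal{F}\cup\{\alpha\}$ closed under uniform substitution and modus ponens. Equivalently, $\varphi\in\mathcal{F}\alpha$ iff $\varphi$ is derivable by modus ponens from $\mathcal{F}$ together with all substitution instances of $\alpha$; and $\mathcal{F}$ is sound and strongly complete for the class of all Epstein models. *)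

theory Defs
  imports Main
begin

text \<open>Formulas: propositional letters p_n = Var n; connectives negation, or, and,
  implication, equivalence, Tri (vartriangle) and Loop (looparrowright).\<close>
datatype form =
    Var nat
  | Neg form
  | Or form form
  | And form form
  | Imp form form
  | Iff form form
  | Tri form form
  | Loop form form

primrec subst :: "(nat \<Rightarrow> form) \<Rightarrow> form \<Rightarrow> form" where
  "subst s (Var n) = s n"
| "subst s (Neg a) = Neg (subst s a)"
| "subst s (Or a b) = Or (subst s a) (subst s b)"
| "subst s (And a b) = And (subst s a) (subst s b)"
| "subst s (Imp a b) = Imp (subst s a) (subst s b)"
| "subst s (Iff a b) = Iff (subst s a) (subst s b)"
| "subst s (Tri a b) = Tri (subst s a) (subst s b)"
| "subst s (Loop a b) = Loop (subst s a) (subst s b)"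

primrec ceval :: "(form \<Rightarrow> bool) \<Rightarrow> form \<Rightarrow> bool" where
  "ceval w (Var n) = w (Var n)"
| "ceval w (Neg a) = (\<not> ceval w a)"
| "ceval w (Or a b) = (ceval w a \<or> ceval w b)"
| "ceval w (And a b) = (ceval w a \<and> ceval w b)"
| "ceval w (Imp a b) = (ceval w a \<longrightarrow> ceval w b)"
| "ceval w (Iff a b) = (ceval w a \<longleftrightarrow> ceval w b)"
| "ceval w (Tri a b) = w (Tri a b)"
| "ceval w (Loop a b) = w (Loop a b)"

definition taut :: "form \<Rightarrow> bool" where
  "taut f \<longleftrightarrow> (\<forall>w. ceval w f)"

inductive_set Fext :: "form set \<Rightarrow> form set" for A :: "form set" where
  taut: "taut f \<Longrightarrow> f \<in> Fext A"
| ax1: "Imp (Loop (Var 0) (Var 1)) (Imp (Var 0) (Var 1)) \<in> Fext A"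
| ax2: "Iff (Tri (Var 0) (Var 1)) (And (Loop (Var 0) (Var 1)) (And (Var 0) (Var 1))) \<in> Fext A"
| extra: "f \<in> A \<Longrightarrow> f \<in> Fext A"
| sub: "f \<in> Fext A \<Longrightarrow> subst s f \<in> Fext A"
| mp: "f \<in> Fext A \<Longrightarrow> Imp f g \<in> Fext A \<Longrightarrow> g \<in> Fext A"

definition F :: "form set" where "F = Fext {}"

definition Falpha :: "form \<Rightarrow> form set" where "Falpha a = Fext {a}"

end

theory Submission
  imports Defs
begin

text \<open>Reading \<open>a \<looparrowright> b\<close> as its consequent \<open>b\<close> and \<open>a \<vartriangle> b\<close> as \<open>a \<and> b\<close> gives a two-valued
  semantics that commutes with substitution and validates every tautology, both axioms of
  \<open>\<F>\<close> and \<open>p \<rightarrow> (q \<looparrowright> p)\<close>, which collapses to \<open>p \<rightarrow> p\<close>. All of \<open>\<F>\<alpha>\<close> is therefore valid in it,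
  whereas \<open>p \<looparrowright> p\<close> collapses to \<open>p\<close> and fails when \<open>p\<close> is false.\<close>

primrec consequent_eval :: "(nat \<Rightarrow> bool) \<Rightarrow> form \<Rightarrow> bool" where
  "consequent_eval v (Var n) = v n"
| "consequent_eval v (Neg a) = (\<not> consequent_eval v a)"
| "consequent_eval v (Or a b) = (consequent_eval v a \<or> consequent_eval v b)"
| "consequent_eval v (And a b) = (consequent_eval v a \<and> consequent_eval v b)"
| "consequent_eval v (Imp a b) = (consequent_eval v a \<longrightarrow> consequent_eval v b)"
| "consequent_eval v (Iff a b) = (consequent_eval v a \<longleftrightarrow> consequent_eval v b)"
| "consequent_eval v (Tri a b) = (consequent_eval v a \<and> consequent_eval v b)"
| "consequent_eval v (Loop a b) = consequent_eval v b"

lemma consequent_eval_subst: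
  "consequent_eval v (subst s f) = consequent_eval (\<lambda>n. consequent_eval v (s n)) f"
  by (induction f) auto

lemma ceval_consequent_eval: "ceval (consequent_eval v) f = consequent_eval v f"
  by (induction f) auto

lemma consequent_eval_taut: "taut f \<Longrightarrow> consequent_eval v f"
  unfolding taut_def by (metis ceval_consequent_eval)

lemma consequent_eval_Fext:
  assumes "f \<in> Fext A" and "\<And>g v. g \<in> A \<Longrightarrow> consequent_eval v g"
  shows "consequent_eval v f"
  using assms(1)
proof (induction arbitrary: v)
  case (taut f)
  then show ?case by (rule consequent_eval_taut)
next
  case (sub f s)
  then show ?case by (simp add: consequent_eval_subst)
qed (auto simp: assms(2))

theorem mainTheorem5:
  fixes p q :: nat
  assumes "p \<noteq> q"
  shows "Loop (Var p) (Var p) \<notin> Falpha (Imp (Var p) (Loop (Var q) (Var p)))"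
proof
  assume "Loop (Var p) (Var p) \<in> Falpha (Imp (Var p) (Loop (Var q) (Var p)))"
  then have "consequent_eval (\<lambda>_. False) (Loop (Var p) (Var p))"
    unfolding Falpha_def by (rule consequent_eval_Fext) auto
  then show False by simp
qed

end
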